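(* Let $(X,d)$ be a compact metric space and $\emptyset\ne F\subseteq X$ with a representation $(\tilde F_k)_{k\in\mathbb{N}}$ such that $F$ is explicitly closed (w.r.t. this representation). Let $(x_n)$ be a sequence in $X$ that has approximate $F$-points. Then the set $\{x_n\mid n\in\mathbb{N}\}$ has an adherent point (a point of its closure) $x\in F$.
   Context: A representation of $F$ is a family $(\tilde F_k)_{k\in\mathbb{N}}$ of subsets of $X$ with $F=\bigcap_{k\in\mathbb{N}}\tilde F_k$; one sets $AF_k:=\bigcap_{l\le k}\tilde F_l$. $(x_n)$ has approximate $F$-points if for every $k\in\mathbb{N}$ there is $N\in\mathbb{N}$ with $x_N\in AF_k$. $F$ is explicitly closed if for every $p\in X$: if $AF_M\cap \overline{B}(p,1/(N+1))\neq\emptyset$ for all $N,M\in\mathbb{N}$, then $p\in F$ (here $\overline B$ is the closed ball). *)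

theory Defs
  imports "HOL-Analysis.Analysis"
begin

text \<open>A representation of F is a family Ft :: nat => 'a set with F = (INT k. Ft k).
  AF Ft k is the intersection of Ft l for l <= k.\<close>
definition AF :: "(nat \<Rightarrow> 'a set) \<Rightarrow> nat \<Rightarrow> 'a set" where
  "AF Ft k = (\<Inter>l\<in>{..k}. Ft l)"

definition has_approx_F_points :: "(nat \<Rightarrow> 'a set) \<Rightarrow> (nat \<Rightarrow> 'a) \<Rightarrow> bool" where
  "has_approx_F_points Ft x \<longleftrightarrow> (\<forall>k. \<exists>N. x N \<in> AF Ft k)"

definition explicitly_closed :: "'a::metric_space set \<Rightarrow> 'a set \<Rightarrow> (nat \<Rightarrow> 'a set) \<Rightarrow> bool" where
  "explicitly_closed X F Ft \<longleftrightarrow>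
     (\<forall>p\<in>X. (\<forall>N M. AF Ft M \<inter> cball p (1 / (real N + 1)) \<noteq> {}) \<longrightarrow> p \<in> F)"

end

theory Submission
  imports Defs
begin

text \<open>Pick for every k an index with x N \<in> AF k; by compactness a subsequence of these
  points converges to some p \<in> X. Since the AF k decrease, the tail of that subsequence lies in
  every AF M, so every ball around p meets every AF M and explicit closedness gives p \<in> F.\<close>

lemma AF_antimono:
  fixes Ft :: "nat \<Rightarrow> 'a set"
  shows "M \<le> k \<Longrightarrow> AF Ft k \<subseteq> AF Ft M"
  unfolding AF_def by auto

lemma AF_inter_ball_nonempty_if_tendsto:
  assumes approx: "\<And>k. y k \<in> AF Ft k" and lim: "y \<longlonglongrightarrow> p" and "e > 0"
  shows "AF Ft M \<inter> cball p e \<noteq> {}"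
proof -
  have "\<forall>\<^sub>F k in sequentially. dist (y k) p < e \<and> M \<le> k"
    using tendstoD[OF lim \<open>e > 0\<close>] eventually_ge_at_top by (rule eventually_conj)
  then obtain k where close: "dist (y k) p < e" and "M \<le> k"
    using eventually_happens' sequentially_bot by blast
  have "y k \<in> AF Ft M"
    using approx AF_antimono[of M k Ft, OF \<open>M \<le> k\<close>] by blast
  moreover have "y k \<in> cball p e"
    using close by (simp add: dist_commute)
  ultimately show ?thesis by blast
qed

lemma explicitly_closed_tendsto_mem:
  assumes "explicitly_closed X F Ft" and "p \<in> X"
    and "\<And>k. y k \<in> AF Ft k" and "y \<longlonglongrightarrow> p"
  shows "p \<in> F"
proof -
  have "AF Ft M \<inter> cball p (1 / (real N + 1)) \<noteq> {}" for N M
    using AF_inter_ball_nonempty_if_tendsto[OF assms(3,4)] by simp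
  then show ?thesis
    using assms(1,2) unfolding explicitly_closed_def by blast
qed

theorem lemma3p6:
  fixes X :: "'a::metric_space set" and F :: "'a set" and Ft :: "nat \<Rightarrow> 'a set"
    and x :: "nat \<Rightarrow> 'a"
  assumes "compact X"
    and "F \<noteq> {}" and "F \<subseteq> X"
    and "\<And>k. Ft k \<subseteq> X"
    and "F = (\<Inter>k. Ft k)"
    and "explicitly_closed X F Ft"
    and "\<And>n. x n \<in> X"
    and "has_approx_F_points Ft x"
  shows "\<exists>p\<in>F. p \<in> closure (range x)"
proof -
  obtain g where g: "\<And>k. x (g k) \<in> AF Ft k"
    using assms(8) unfolding has_approx_F_points_def by metis
  have "\<And>k. (x \<circ> g) k \<in> X"
    using assms(7) by simp
  then obtain p r where "p \<in> X" and r: "strict_mono r" and lim: "(x \<circ> g \<circ> r) \<longlonglongrightarrow> p"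
    using \<open>compact X\<close> unfolding compact_def by blast
  have "(x \<circ> g \<circ> r) k \<in> AF Ft k" for k
    using g[of "r k"] AF_antimono[of k "r k" Ft, OF seq_suble[OF r]] by auto
  then have "p \<in> F"
    using explicitly_closed_tendsto_mem[OF assms(6) \<open>p \<in> X\<close> _ lim] by blast
  moreover have "p \<in> closure (range x)"
    unfolding closure_sequential by (rule exI[of _ "x \<circ> g \<circ> r"]) (use lim in auto)
  ultimately show ?thesis by blast
qed

end
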